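(* Let $X$ be a finite $T_0$ space and $Y=X\circledast\mathbb{S}^0$ its non-Hausdorff suspension. Then $\mathrm{TC}(Y)=1$ if $X$ is contractible, and $\mathrm{TC}(Y)=4$ if $X$ is not contractible.
   Context: Finite $T_0$ spaces are identified with finite posets ($x^\downarrow=\{y:y\le x\}$ is the minimal open neighborhood of $x$; open sets are the down-closed sets). The non-Hausdorff join $A\circledast B$ of finite $T_0$ spaces $A,B$ is the disjoint union $A\sqcup B$ with the orders of $A$ and $B$ kept and additionally $a\le b$ for all $a\in A$, $b\in B$. $\mathbb{S}^0=\{x_0,y_0\}$ is the two-point discrete space, and $X\circledast\mathbb{S}^0$ is the non-Hausdorff suspension. Topological complexity is unreduced: for path-connected $Y$, with $\pi:Y^I\to Y\times Y$, $\gamma\mapsto(\gamma(0),\gamma(1))$ ($Y^I$ with compact-open topology), $\mathrm{TC}(Y)$ is the minimal $k$ such that $Y\times Y$ is covered by $k$ open sets each admitting a continuous section of $\pi$. *)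

theory Defs
  imports "HOL-Analysis.Analysis" "HOL-Library.FuncSet"
begin

text \<open>The underlying set is the
disjoint union; for finite T0 spaces (= finite posets with the down-set topology)
the down-closed sets of the join order (orders of A and B kept, a \<le> b for all
a in A, b in B) are exactly the sets U whose traces on A and on B are open and
which contain all of A as soon as they meet B.\<close>

definition nh_join :: "'a topology \<Rightarrow> 'b topology \<Rightarrow> ('a + 'b) topology" where
  "nh_join A B = topology (\<lambda>U. U \<subseteq> Inl ` topspace A \<union> Inr ` topspace B
      \<and> openin A (Inl -` U) \<and> openin B (Inr -` U)
      \<and> (Inr -` U \<noteq> {} \<longrightarrow> topspace A \<subseteq> Inl -` U))"

definition S0 :: "bool topology" where
  "S0 = discrete_topology UNIV"

definition nh_suspension :: "'a topology \<Rightarrow> ('a + bool) topology" where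
  "nh_suspension X = nh_join X S0"

text \<open>Free path space Y^I with the compact-open topology.  Paths are represented
as functions on [0,1], extensional (value undefined outside [0,1]).\<close>
definition path_carrier :: "'a topology \<Rightarrow> (real \<Rightarrow> 'a) set" where
  "path_carrier Y = {g. continuous_map (top_of_set {0..1}) Y g \<and> g \<in> extensional {0..1}}"

definition path_space :: "'a topology \<Rightarrow> (real \<Rightarrow> 'a) topology" where
  "path_space Y = topology_generated_by
     {{g \<in> path_carrier Y. g ` K \<subseteq> V} | K V. compact K \<and> K \<subseteq> {0..1} \<and> openin Y V}"

definition has_motion_planner :: "'a topology \<Rightarrow> ('a \<times> 'a) set \<Rightarrow> bool" where
  "has_motion_planner Y U \<longleftrightarrow>
     (\<exists>s. continuous_map (subtopology (prod_topology Y Y) U) (path_space Y) s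
          \<and> (\<forall>p\<in>U. s p 0 = fst p \<and> s p 1 = snd p))"

definition tc_cover :: "'a topology \<Rightarrow> nat \<Rightarrow> bool" where
  "tc_cover Y k \<longleftrightarrow>
     (\<exists>U :: nat \<Rightarrow> ('a \<times> 'a) set.
        (\<forall>i<k. openin (prod_topology Y Y) (U i) \<and> has_motion_planner Y (U i))
        \<and> topspace (prod_topology Y Y) \<subseteq> (\<Union>i<k. U i))"

text \<open>Unreduced topological complexity.\<close>
definition TC :: "'a topology \<Rightarrow> nat" where
  "TC Y = (LEAST k. tc_cover Y k)"

end

theory Submission
  imports Defs
begin

text \<open>Finite T0 spaces are posets under the specialization order, and a homotopy between maps of
finite spaces is a fence of pointwise comparable maps. Deleting a beat point is a homotopy
equivalence and leaves the suspension structure intact, so X and its suspension Y can be reduced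
simultaneously to the case where X has no beat points; then either X is a point and both are
contractible, or X and Y are minimal with at least two points and neither is contractible.

A motion planner on an open set U of Y \<times> Y amounts to a homotopy between the two projections on U.
If Y is contractible, one such set suffices. Otherwise, since open sets of Y \<times> Y are down-closed,
an open planner set containing two of the four pairs of maximal points would contain a whole slice
Y \<times> {y} or {y} \<times> Y and so contract Y; hence four sets are needed, and the four products of the
minimal neighbourhoods of the maximal points suffice.\<close>

section \<open>Specialization order and homotopies of finite spaces\<close>

definition spec_le :: "'a topology \<Rightarrow> 'a \<Rightarrow> 'a \<Rightarrow> bool" where
  "spec_le T x y \<longleftrightarrow> (\<forall>V. openin T V \<longrightarrow> y \<in> V \<longrightarrow> x \<in> V)"

definition minimal_nbhd :: "'a topology \<Rightarrow> 'a \<Rightarrow> 'a set" where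
  "minimal_nbhd T x = {y \<in> topspace T. spec_le T y x}"

lemma spec_le_refl [simp]: "spec_le T x x"
  by (simp add: spec_le_def)

lemma spec_le_trans: "spec_le T x y \<Longrightarrow> spec_le T y z \<Longrightarrow> spec_le T x z"
  by (auto simp: spec_le_def)

lemma t0_space_iff_spec_le_antisym:
  "t0_space T \<longleftrightarrow>
     (\<forall>x\<in>topspace T. \<forall>y\<in>topspace T. spec_le T x y \<and> spec_le T y x \<longrightarrow> x = y)"
  unfolding t0_space_def spec_le_def by metis

lemma spec_le_antisym:
  "t0_space T \<Longrightarrow> x \<in> topspace T \<Longrightarrow> y \<in> topspace T \<Longrightarrow> spec_le T x y \<Longrightarrow> spec_le T y x
    \<Longrightarrow> x = y"
  unfolding t0_space_iff_spec_le_antisym by blast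

lemma spec_le_subtopology:
  "x \<in> S \<Longrightarrow> y \<in> S \<Longrightarrow> spec_le (subtopology T S) x y \<longleftrightarrow> spec_le T x y"
  unfolding spec_le_def openin_subtopology by blast

lemma spec_le_openin: "spec_le T x y \<Longrightarrow> openin T V \<Longrightarrow> y \<in> V \<Longrightarrow> x \<in> V"
  unfolding spec_le_def by blast

lemma continuous_map_spec_le:
  assumes f: "continuous_map X Y f" and y: "y \<in> topspace X" and xy: "spec_le X x y"
  shows "spec_le Y (f x) (f y)"
  unfolding spec_le_def
proof (intro allI impI)
  fix V assume "openin Y V" "f y \<in> V"
  then have "openin X {z \<in> topspace X. f z \<in> V}" "y \<in> {z \<in> topspace X. f z \<in> V}"
    using f y by (auto simp: continuous_map_def)
  then show "f x \<in> V" using xy by (auto dest: spec_le_openin)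
qed

lemma openin_minimal_nbhd:
  assumes "finite (topspace T)" "x \<in> topspace T"
  shows "openin T (minimal_nbhd T x)"
proof -
  let ?F = "{V. openin T V \<and> x \<in> V}"
  have "?F \<subseteq> Pow (topspace T)"
    by (auto dest: openin_subset)
  then have "finite ?F"
    using assms(1) by (simp add: finite_subset)
  then have "openin T (\<Inter>?F)"
    using assms(2) by (intro openin_Inter) auto
  moreover have "\<Inter>?F = minimal_nbhd T x"
    using assms(2) by (auto simp: minimal_nbhd_def spec_le_def)
  ultimately show ?thesis by simp
qed

lemma openin_prod_topology_spec_le:
  assumes U: "openin (prod_topology X Y) U" and "(p, q) \<in> U"
    and "spec_le X x p" "spec_le Y y q"
  shows "(x, y) \<in> U"
proof -
  obtain A B where AB: "openin X A" "openin Y B" "p \<in> A" "q \<in> B" "A \<times> B \<subseteq> U"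
    using U[unfolded openin_prod_topology_alt, rule_format, OF \<open>(p, q) \<in> U\<close>] by blast
  have "x \<in> A" "y \<in> B"
    using spec_le_openin[OF assms(3) AB(1,3)] spec_le_openin[OF assms(4) AB(2,4)] .
  with AB(5) show ?thesis by blast
qed

lemma continuous_map_finite_spec_leI:
  assumes fin: "finite (topspace X)" and f: "f \<in> topspace X \<rightarrow> topspace Y"
    and mono: "\<And>x y. x \<in> topspace X \<Longrightarrow> y \<in> topspace X \<Longrightarrow> spec_le X x y
                 \<Longrightarrow> spec_le Y (f x) (f y)"
  shows "continuous_map X Y f"
  unfolding continuous_map_def
proof (intro conjI allI impI f)
  fix U assume U: "openin Y U"
  let ?S = "{x \<in> topspace X. f x \<in> U}"
  have "?S = (\<Union>x\<in>?S. minimal_nbhd X x)"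
    using mono U by (auto simp: minimal_nbhd_def dest: spec_le_openin)
  moreover have "openin X (\<Union>x\<in>?S. minimal_nbhd X x)"
    using fin by (intro openin_Union) (auto intro: openin_minimal_nbhd)
  ultimately show "openin X ?S" by simp
qed

text \<open>The homotopy stays at \<open>f\<close> on \<open>[0,1)\<close> and jumps to \<open>g\<close> at time \<open>1\<close>; this is continuous
because open sets are down-closed.\<close>

lemma homotopic_with_spec_le:
  assumes f: "continuous_map W Z f" and g: "continuous_map W Z g"
    and le: "\<And>w. w \<in> topspace W \<Longrightarrow> spec_le Z (f w) (g w)"
  shows "homotopic_with (\<lambda>x. True) W Z f g"
  unfolding homotopic_with_def
proof (intro exI conjI allI)
  let ?h = "\<lambda>(t::real, x). if t = 1 then g x else f x"
  show "?h (0, x) = f x" "?h (1, x) = g x" for x by simp_all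
  show "continuous_map (prod_topology (top_of_set {0..1}) W) Z ?h"
    unfolding continuous_map_def
  proof (intro conjI allI impI)
    show "?h \<in> topspace (prod_topology (top_of_set {0..1}) W) \<rightarrow> topspace Z"
      using f g by (auto simp: continuous_map_def)
    fix U assume U: "openin Z U"
    have "f x \<in> U" if "x \<in> topspace W" "g x \<in> U" for x
      using le[OF that(1)] U that(2) by (rule spec_le_openin)
    then have "{x \<in> topspace (prod_topology (top_of_set {0..1}) W). ?h x \<in> U}
        = (({0..1} \<inter> {..<1}) \<times> {x \<in> topspace W. f x \<in> U}) \<union> ({0..1} \<times> {x \<in> topspace W. g x \<in> U})"
      by (auto split: if_splits)
    moreover have "openin (top_of_set {0..1}) ({0..1} \<inter> {..<(1::real)})"
      by (rule openin_open_Int) simp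
    moreover have "openin W {x \<in> topspace W. f x \<in> U}" "openin W {x \<in> topspace W. g x \<in> U}"
      using f g U by (auto simp: continuous_map_def)
    ultimately show "openin (prod_topology (top_of_set {0..1}) W)
        {x \<in> topspace (prod_topology (top_of_set {0..1}) W). ?h x \<in> U}"
      by (auto intro!: openin_Un openin_prod_Times_iff[THEN iffD2])
  qed
qed simp

definition comparable_maps :: "'a topology \<Rightarrow> 'b topology \<Rightarrow> ('a \<Rightarrow> 'b) \<Rightarrow> ('a \<Rightarrow> 'b) \<Rightarrow> bool"
  where "comparable_maps W Z f g \<longleftrightarrow> continuous_map W Z f \<and> continuous_map W Z g \<and>
     ((\<forall>w\<in>topspace W. spec_le Z (f w) (g w)) \<or> (\<forall>w\<in>topspace W. spec_le Z (g w) (f w)))"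

lemma homotopy_locally_spec_le:
  assumes finW: "finite (topspace W)" and finZ: "finite (topspace Z)"
    and h: "continuous_map (prod_topology I W) Z h" and a: "a \<in> topspace I"
  shows "\<exists>T. openin I T \<and> a \<in> T \<and> (\<forall>t\<in>T. \<forall>w\<in>topspace W. spec_le Z (h (t, w)) (h (a, w)))"
proof -
  define T where
    "T = (\<Inter>w\<in>topspace W. {t \<in> topspace I. h (t, w) \<in> minimal_nbhd Z (h (a, w))}) \<inter> topspace I"
  have slice: "continuous_map I Z (\<lambda>t. h (t, w))" if "w \<in> topspace W" for w
    using continuous_map_compose[OF continuous_map_pairedI[OF continuous_map_id
          continuous_map_const[THEN iffD2]] h] that
    by (simp add: o_def)
  have "openin I T"
    unfolding T_def using finW finZ a
    by (intro openin_INT openin_continuous_map_preimage[OF slice] openin_minimal_nbhd)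
       (auto intro: continuous_map_image_subset_topspace[OF h, THEN subsetD])
  moreover have "a \<in> T"
    using a h by (auto simp: T_def minimal_nbhd_def continuous_map_def)
  ultimately show ?thesis
    by (intro exI[of _ T]) (auto simp: T_def minimal_nbhd_def)
qed

text \<open>Connectedness of \<open>[0,1]\<close>: every time has a neighbourhood on which the homotopy stays
below its value at that time.\<close>

lemma homotopic_with_imp_comparable_maps_chain:
  assumes finW: "finite (topspace W)" and finZ: "finite (topspace Z)"
    and "homotopic_with (\<lambda>x. True) W Z f g"
  shows "(comparable_maps W Z)\<^sup>*\<^sup>* f g"
proof -
  obtain h where h: "continuous_map (prod_topology (top_of_set {0..1::real}) W) Z h"
    and h0: "\<And>x. h (0, x) = f x" and h1: "\<And>x. h (1, x) = g x"
    using assms(3) unfolding homotopic_with_def by blast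
  define H where "H t = (\<lambda>x. h (t, x))" for t
  have H: "continuous_map W Z (H t)" if "t \<in> {0..1}" for t
    using continuous_map_o_Pair[OF h] that by (simp add: H_def o_def)
  have "H 0 = f" "H 1 = g"
    by (simp_all add: H_def h0 h1)
  have "(comparable_maps W Z)\<^sup>*\<^sup>* f (H 1)"
  proof (rule connected_induction_simple[of "{0..1::real}" 0])
    show "(comparable_maps W Z)\<^sup>*\<^sup>* f (H 0)"
      using \<open>H 0 = f\<close> by simp
  next
    fix a :: real assume a: "a \<in> {0..1}"
    then obtain T where T: "openin (top_of_set {0..1}) T" "a \<in> T"
      and below: "\<forall>t\<in>T. \<forall>w\<in>topspace W. spec_le Z (H t w) (H a w)"
      using homotopy_locally_spec_le[OF finW finZ h, of a] unfolding H_def by auto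
    have "T \<subseteq> {0..1}"
      using openin_subset[OF T(1)] by simp
    then have near: "comparable_maps W Z (H t) (H a)" "comparable_maps W Z (H a) (H t)"
      if "t \<in> T" for t
      using that a H below by (auto simp: comparable_maps_def)
    have "(comparable_maps W Z)\<^sup>*\<^sup>* (H x) (H y)" if "x \<in> T" "y \<in> T" for x y
      using near(1)[OF that(1)] near(2)[OF that(2)] by (meson r_into_rtranclp rtranclp.rtrancl_into_rtrancl)
    then show "\<exists>T. openin (top_of_set {0..1}) T \<and> a \<in> T \<and>
        (\<forall>x\<in>T. \<forall>y\<in>T. (comparable_maps W Z)\<^sup>*\<^sup>* f (H x) \<longrightarrow> (comparable_maps W Z)\<^sup>*\<^sup>* f (H y))"
      using T by (blast intro: rtranclp_trans)
  qed auto
  with \<open>H 1 = g\<close> show ?thesis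
    by simp
qed

section \<open>Beat points and minimal finite spaces\<close>

definition down_beat_point :: "'a topology \<Rightarrow> 'a \<Rightarrow> 'a \<Rightarrow> bool" where
  "down_beat_point T p m \<longleftrightarrow> p \<in> topspace T \<and> m \<in> topspace T \<and> m \<noteq> p \<and> spec_le T m p \<and>
     (\<forall>y\<in>topspace T. spec_le T y p \<and> y \<noteq> p \<longrightarrow> spec_le T y m)"

definition up_beat_point :: "'a topology \<Rightarrow> 'a \<Rightarrow> 'a \<Rightarrow> bool" where
  "up_beat_point T p m \<longleftrightarrow> p \<in> topspace T \<and> m \<in> topspace T \<and> m \<noteq> p \<and> spec_le T p m \<and>
     (\<forall>y\<in>topspace T. spec_le T p y \<and> y \<noteq> p \<longrightarrow> spec_le T m y)"

definition beat_point :: "'a topology \<Rightarrow> 'a \<Rightarrow> bool" where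
  "beat_point T p \<longleftrightarrow> (\<exists>m. down_beat_point T p m \<or> up_beat_point T p m)"

definition minimal_finite_space :: "'a topology \<Rightarrow> bool" where
  "minimal_finite_space T \<longleftrightarrow> finite (topspace T) \<and> t0_space T \<and> (\<forall>p. \<not> beat_point T p)"

lemma beat_point_in_topspace: "beat_point T p \<Longrightarrow> p \<in> topspace T"
  by (auto simp: beat_point_def down_beat_point_def up_beat_point_def)

text \<open>Collapsing a beat point onto the point \<open>m\<close> that witnesses it is a retraction comparable
with the identity.\<close>

lemma homotopy_equivalent_space_delete_beat_point:
  assumes fin: "finite (topspace T)" and "beat_point T p"
  shows "T homotopy_equivalent_space subtopology T (topspace T - {p})"
proof -
  let ?S = "subtopology T (topspace T - {p})"
  obtain m where beat: "down_beat_point T p m \<or> up_beat_point T p m"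
    using \<open>beat_point T p\<close> unfolding beat_point_def by blast
  then have m: "m \<in> topspace T" "m \<noteq> p"
    by (auto simp: down_beat_point_def up_beat_point_def)
  define r where "r z = (if z = p then m else z)" for z
  have r_mono: "spec_le T (r x) (r y)"
    if "x \<in> topspace T" "y \<in> topspace T" "spec_le T x y" for x y
    using beat that unfolding r_def down_beat_point_def up_beat_point_def
    by (auto intro: spec_le_trans)
  have r_S: "continuous_map T ?S r"
  proof (rule continuous_map_finite_spec_leI[OF fin])
    show "r \<in> topspace T \<rightarrow> topspace ?S"
      using m by (auto simp: r_def)
    show "spec_le ?S (r x) (r y)" if "x \<in> topspace T" "y \<in> topspace T" "spec_le T x y" for x y
      using that m r_mono[OF that] by (subst spec_le_subtopology) (auto simp: r_def)
  qed
  then have r: "continuous_map T T r"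
    by (rule continuous_map_into_fulltopology)
  have "homotopic_with (\<lambda>x. True) ?S ?S (r \<circ> id) id"
    using continuous_map_from_subtopology[OF r_S] by (intro homotopic_with_equal) (auto simp: r_def)
  moreover have "homotopic_with (\<lambda>x. True) T T (id \<circ> r) id"
    using beat
  proof
    assume "down_beat_point T p m"
    then show ?thesis
      using homotopic_with_spec_le[OF r continuous_map_id] by (auto simp: r_def down_beat_point_def)
  next
    assume "up_beat_point T p m"
    then have "homotopic_with (\<lambda>x. True) T T id r"
      using homotopic_with_spec_le[OF continuous_map_id r] by (auto simp: r_def up_beat_point_def)
    then show ?thesis
      by (simp add: homotopic_with_sym)
  qed
  ultimately show ?thesis
    unfolding homotopy_equivalent_space_def
    using r_S continuous_map_from_subtopology[OF continuous_map_id] by blast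
qed

text \<open>If \<open>x\<close> were a lowest point moved by \<open>f\<close>, then \<open>f x\<close> would be the greatest element
strictly below \<open>x\<close>, making \<open>x\<close> a down beat point.\<close>

lemma minimal_finite_space_fixpoint_below:
  assumes T: "minimal_finite_space T" and f: "continuous_map T T f"
    and le: "\<And>x. x \<in> topspace T \<Longrightarrow> spec_le T (f x) x"
  shows "x \<in> topspace T \<Longrightarrow> f x = x"
proof (induction "card (minimal_nbhd T x)" arbitrary: x rule: less_induct)
  case less
  have fin: "finite (topspace T)" and t0: "t0_space T" and nb: "\<And>p. \<not> beat_point T p"
    using T by (auto simp: minimal_finite_space_def)
  have fixed_below: "f y = y" if y: "y \<in> topspace T" "spec_le T y x" "y \<noteq> x" for y
  proof -
    have "minimal_nbhd T y \<subseteq> minimal_nbhd T x"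
      using y by (auto simp: minimal_nbhd_def intro: spec_le_trans)
    moreover have "x \<in> minimal_nbhd T x - minimal_nbhd T y"
      using y less.prems spec_le_antisym[OF t0 y(1) less.prems] by (auto simp: minimal_nbhd_def)
    ultimately have "minimal_nbhd T y \<subset> minimal_nbhd T x"
      by blast
    then have "card (minimal_nbhd T y) < card (minimal_nbhd T x)"
      using fin by (intro psubset_card_mono) (auto simp: minimal_nbhd_def)
    then show ?thesis using less.hyps y by blast
  qed
  show "f x = x"
  proof (rule ccontr)
    assume "f x \<noteq> x"
    moreover have "spec_le T y (f x)" if "y \<in> topspace T" "spec_le T y x \<and> y \<noteq> x" for y
      using continuous_map_spec_le[OF f less.prems, of y] fixed_below that by simp
    ultimately have "down_beat_point T x (f x)"
      unfolding down_beat_point_def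
      using less.prems le continuous_map_image_subset_topspace[OF f] by blast
    then show False
      using nb unfolding beat_point_def by blast
  qed
qed

lemma minimal_finite_space_fixpoint_above:
  assumes T: "minimal_finite_space T" and f: "continuous_map T T f"
    and le: "\<And>x. x \<in> topspace T \<Longrightarrow> spec_le T x (f x)"
  shows "x \<in> topspace T \<Longrightarrow> f x = x"
proof (induction "card {y \<in> topspace T. spec_le T x y}" arbitrary: x rule: less_induct)
  case less
  have fin: "finite (topspace T)" and t0: "t0_space T" and nb: "\<And>p. \<not> beat_point T p"
    using T by (auto simp: minimal_finite_space_def)
  have fixed_above: "f y = y" if y: "y \<in> topspace T" "spec_le T x y" "y \<noteq> x" for y
  proof -
    have "{z \<in> topspace T. spec_le T y z} \<subseteq> {z \<in> topspace T. spec_le T x z}"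
      using y by (auto intro: spec_le_trans)
    moreover have "x \<in> {z \<in> topspace T. spec_le T x z} - {z \<in> topspace T. spec_le T y z}"
      using y less.prems spec_le_antisym[OF t0 less.prems y(1)] by auto
    ultimately have "{z \<in> topspace T. spec_le T y z} \<subset> {z \<in> topspace T. spec_le T x z}"
      by blast
    then have "card {z \<in> topspace T. spec_le T y z} < card {z \<in> topspace T. spec_le T x z}"
      using fin by (intro psubset_card_mono) auto
    then show ?thesis using less.hyps y by blast
  qed
  show "f x = x"
  proof (rule ccontr)
    assume "f x \<noteq> x"
    moreover have "spec_le T (f x) y" if "y \<in> topspace T" "spec_le T x y \<and> y \<noteq> x" for y
      using continuous_map_spec_le[OF f that(1), of x] fixed_above that by simp
    ultimately have "up_beat_point T x (f x)"
      unfolding up_beat_point_def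
      using less.prems le continuous_map_image_subset_topspace[OF f] by blast
    then show False
      using nb unfolding beat_point_def by blast
  qed
qed

lemma minimal_finite_space_comparable_maps_chain_id:
  assumes T: "minimal_finite_space T" and "(comparable_maps T T)\<^sup>*\<^sup>* id g"
  shows "x \<in> topspace T \<Longrightarrow> g x = x"
  using assms(2)
proof (induction arbitrary: x rule: rtranclp_induct)
  case (step f g)
  then have "(\<forall>w\<in>topspace T. spec_le T w (g w)) \<or> (\<forall>w\<in>topspace T. spec_le T (g w) w)"
    and "continuous_map T T g"
    by (auto simp: comparable_maps_def)
  then show ?case
    using minimal_finite_space_fixpoint_above[OF T] minimal_finite_space_fixpoint_below[OF T]
      step.prems by blast
qed simp

lemma contractible_minimal_finite_space:
  assumes T: "minimal_finite_space T" and "contractible_space T"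
  shows "\<exists>c. topspace T \<subseteq> {c}"
proof -
  obtain c where "homotopic_with (\<lambda>x. True) T T id (\<lambda>x. c)"
    using assms(2) unfolding contractible_space_def by blast
  then have "(comparable_maps T T)\<^sup>*\<^sup>* id (\<lambda>x. c)"
    using T by (intro homotopic_with_imp_comparable_maps_chain) (auto simp: minimal_finite_space_def)
  then have "topspace T \<subseteq> {c}"
    using minimal_finite_space_comparable_maps_chain_id[OF T] by auto
  then show ?thesis ..
qed

lemma contractible_space_spec_least:
  assumes "c \<in> topspace T" "\<And>x. x \<in> topspace T \<Longrightarrow> spec_le T c x"
  shows "contractible_space T"
  unfolding contractible_space_def
  using homotopic_with_spec_le[of T T "\<lambda>x. c" id] assms
  by (auto intro: homotopic_with_symD)

lemma finite_t0_space_has_spec_maximal: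
  assumes "finite (topspace T)" "t0_space T" "A \<subseteq> topspace T" "A \<noteq> {}"
  shows "\<exists>y\<in>A. \<forall>z\<in>A. spec_le T y z \<longrightarrow> z = y"
proof -
  let ?R = "\<lambda>x y. spec_le T x y \<and> x \<noteq> y"
  have "asymp_on A ?R" "transp_on A ?R"
    using assms(2,3) spec_le_antisym[OF assms(2)]
    by (auto simp: asymp_on_def transp_on_def intro: spec_le_trans)
  with assms show ?thesis
    using Finite_Set.bex_max_element[of A ?R] by (auto dest: finite_subset)
qed

text \<open>A maximal point below a greatest element \<open>m\<close> is an up beat point with witness \<open>m\<close>.\<close>

lemma beat_point_if_spec_greatest:
  assumes fin: "finite (topspace T)" and t0: "t0_space T" and m: "m \<in> topspace T"
    and greatest: "\<And>y. y \<in> topspace T \<Longrightarrow> spec_le T y m" and "\<exists>y\<in>topspace T. y \<noteq> m"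
  shows "\<exists>q. beat_point T q"
proof -
  obtain y where y: "y \<in> topspace T - {m}" "\<And>z. z \<in> topspace T - {m} \<Longrightarrow> spec_le T y z \<Longrightarrow> z = y"
    using finite_t0_space_has_spec_maximal[OF fin t0, of "topspace T - {m}"] assms(5) by blast
  then have "up_beat_point T y m"
    using m greatest unfolding up_beat_point_def by fastforce
  then show ?thesis
    unfolding beat_point_def by blast
qed

section \<open>Abstract non-Hausdorff suspensions\<close>

text \<open>\<open>Z\<close> is the non-Hausdorff suspension of \<open>topspace Z - {a, b}\<close>, with poles \<open>a\<close> and \<open>b\<close>.\<close>

definition suspension_poles :: "'a topology \<Rightarrow> 'a \<Rightarrow> 'a \<Rightarrow> bool" where
  "suspension_poles Z a b \<longleftrightarrow> a \<in> topspace Z \<and> b \<in> topspace Z \<and>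
     \<not> spec_le Z a b \<and> \<not> spec_le Z b a \<and>
     (\<forall>z\<in>topspace Z - {a, b}. spec_le Z z a \<and> spec_le Z z b)"

lemma suspension_poles_sym: "suspension_poles Z a b \<Longrightarrow> suspension_poles Z b a"
  unfolding suspension_poles_def by blast

lemma suspension_poles_maximal:
  assumes "t0_space Z" "suspension_poles Z a b" "z \<in> topspace Z" "spec_le Z a z"
  shows "z = a"
  using assms spec_le_antisym[OF assms(1)] unfolding suspension_poles_def by blast

lemma suspension_poles_delete:
  assumes "suspension_poles Z a b" "p \<notin> {a, b}"
  shows "suspension_poles (subtopology Z (topspace Z - {p})) a b"
  using assms unfolding suspension_poles_def by (auto simp: spec_le_subtopology)

lemma beat_point_suspension_poles:
  assumes t0: "t0_space Z" and ab: "suspension_poles Z a b"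
    and "beat_point (subtopology Z (topspace Z - {a, b})) p"
  shows "beat_point Z p"
proof -
  let ?X = "subtopology Z (topspace Z - {a, b})"
  have le_X: "spec_le ?X x y \<longleftrightarrow> spec_le Z x y" if "x \<in> topspace ?X" "y \<in> topspace ?X" for x y
    using that by (simp add: spec_le_subtopology)
  obtain m where "down_beat_point ?X p m \<or> up_beat_point ?X p m"
    using assms(3) unfolding beat_point_def by blast
  then have "down_beat_point Z p m \<or> up_beat_point Z p m"
  proof
    assume down: "down_beat_point ?X p m"
    have "y \<in> topspace ?X" if "y \<in> topspace Z" "spec_le Z y p" for y
      using that down suspension_poles_maximal[OF t0 ab] suspension_poles_maximal[OF t0 suspension_poles_sym[OF ab]]
      unfolding down_beat_point_def by (auto intro: spec_le_trans)
    with down show ?thesis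
      unfolding down_beat_point_def by (auto simp: le_X)
  next
    assume up: "up_beat_point ?X p m"
    have "spec_le Z m a" "spec_le Z m b"
      using up ab unfolding up_beat_point_def suspension_poles_def by auto
    with up show ?thesis
      unfolding up_beat_point_def by (auto simp: le_X)
  qed
  then show ?thesis
    unfolding beat_point_def by blast
qed

lemma beat_point_suspension_remainder:
  assumes t0: "t0_space Z" and ab: "suspension_poles Z a b"
    and p: "p \<in> topspace Z - {a, b}" and "beat_point Z p"
  shows "beat_point (subtopology Z (topspace Z - {a, b})) p"
proof -
  let ?X = "subtopology Z (topspace Z - {a, b})"
  obtain m where "down_beat_point Z p m \<or> up_beat_point Z p m"
    using assms(4) unfolding beat_point_def by blast
  then have "down_beat_point ?X p m \<or> up_beat_point ?X p m"
  proof
    assume down: "down_beat_point Z p m"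
    then have "m \<noteq> a" "m \<noteq> b"
      using p suspension_poles_maximal[OF t0 ab] suspension_poles_maximal[OF t0 suspension_poles_sym[OF ab]]
      unfolding down_beat_point_def by blast+
    with down p show ?thesis
      unfolding down_beat_point_def by (auto simp: spec_le_subtopology)
  next
    assume up: "up_beat_point Z p m"
    have p_below: "spec_le Z p a" "spec_le Z p b"
      using p ab unfolding suspension_poles_def by auto
    then have "m \<noteq> a" "m \<noteq> b"
      using up p ab unfolding up_beat_point_def suspension_poles_def by metis+
    with up p show ?thesis
      unfolding up_beat_point_def by (auto simp: spec_le_subtopology)
  qed
  then show ?thesis
    unfolding beat_point_def by blast
qed

text \<open>A down beat point at a pole would be witnessed by a greatest element of the remainder,
which then has an up beat point as soon as it has two points.\<close>

lemma suspension_pole_not_beat_point: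
  assumes fin: "finite (topspace Z)" and t0: "t0_space Z" and ab: "suspension_poles Z a b"
    and no_beat: "\<And>p. \<not> beat_point (subtopology Z (topspace Z - {a, b})) p"
    and two: "x \<in> topspace Z - {a, b}" "y \<in> topspace Z - {a, b}" "x \<noteq> y"
  shows "\<not> beat_point Z a"
proof
  let ?X = "subtopology Z (topspace Z - {a, b})"
  assume "beat_point Z a"
  then obtain m where "down_beat_point Z a m \<or> up_beat_point Z a m"
    unfolding beat_point_def by blast
  moreover have "\<not> up_beat_point Z a m"
    using suspension_poles_maximal[OF t0 ab] unfolding up_beat_point_def by blast
  ultimately have down: "down_beat_point Z a m"
    by blast
  then have m: "m \<in> topspace ?X"
    using ab unfolding down_beat_point_def suspension_poles_def by auto
  have "spec_le ?X z m" if "z \<in> topspace ?X" for z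
    using that down ab m unfolding down_beat_point_def suspension_poles_def
    by (auto simp: spec_le_subtopology)
  moreover have "\<exists>z\<in>topspace ?X. z \<noteq> m"
    using two by (cases "x = m") auto
  ultimately obtain q where "beat_point ?X q"
    using beat_point_if_spec_greatest[of ?X m] fin t0 m by (auto simp: t0_space_subtopology)
  with no_beat show False
    by blast
qed

lemma minimal_finite_space_suspension_poles:
  assumes fin: "finite (topspace Z)" and t0: "t0_space Z" and ab: "suspension_poles Z a b"
    and X: "minimal_finite_space (subtopology Z (topspace Z - {a, b}))"
    and two: "x \<in> topspace Z - {a, b}" "y \<in> topspace Z - {a, b}" "x \<noteq> y"
  shows "minimal_finite_space Z"
proof -
  have no_beat: "\<And>p. \<not> beat_point (subtopology Z (topspace Z - {a, b})) p"
    using X unfolding minimal_finite_space_def by blast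
  have "{b, a} = {a, b}"
    by blast
  then have "\<not> beat_point Z a" "\<not> beat_point Z b"
    using suspension_pole_not_beat_point[OF fin t0 ab no_beat two]
      suspension_pole_not_beat_point[OF fin t0 suspension_poles_sym[OF ab], of x y] no_beat two
    by auto
  moreover have "\<not> beat_point Z p" if "p \<in> topspace Z - {a, b}" for p
    using beat_point_suspension_remainder[OF t0 ab that] no_beat by blast
  ultimately have "\<not> beat_point Z p" for p
    using beat_point_in_topspace[of Z p] by blast
  with fin t0 show ?thesis
    unfolding minimal_finite_space_def by blast
qed

text \<open>Without beat points in the remainder, the remainder and the whole space are either both points
or both minimal with at least two points.\<close>

lemma contractible_space_suspension_remainder_iff_minimal:
  assumes fin: "finite (topspace Z)" and t0: "t0_space Z" and ab: "suspension_poles Z a b"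
    and ne: "topspace Z - {a, b} \<noteq> {}"
    and no_beat: "\<And>p. \<not> beat_point (subtopology Z (topspace Z - {a, b})) p"
  shows "contractible_space (subtopology Z (topspace Z - {a, b})) \<longleftrightarrow> contractible_space Z"
proof (cases "\<exists>x0. topspace Z - {a, b} = {x0}")
  case True
  then obtain x0 where x0: "topspace Z - {a, b} = {x0}"
    by blast
  then have "spec_le Z x0 a" "spec_le Z x0 b"
    using ab unfolding suspension_poles_def by auto
  moreover have "z = a \<or> z = b \<or> z = x0" if "z \<in> topspace Z" for z
    using that x0 by blast
  ultimately have "spec_le Z x0 z" if "z \<in> topspace Z" for z
    using that by (metis spec_le_refl)
  then have "contractible_space Z"
    using x0 by (intro contractible_space_spec_least[of x0]) auto
  moreover have "contractible_space (subtopology Z (topspace Z - {a, b}))"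
    using x0 by (intro contractible_space_subset_singleton[of _ x0]) auto
  ultimately show ?thesis
    by blast
next
  case False
  then obtain x y where two: "x \<in> topspace Z - {a, b}" "y \<in> topspace Z - {a, b}" "x \<noteq> y"
    using ne by blast
  have X: "minimal_finite_space (subtopology Z (topspace Z - {a, b}))"
    using fin t0 no_beat unfolding minimal_finite_space_def by (auto simp: t0_space_subtopology)
  then have "minimal_finite_space Z"
    using minimal_finite_space_suspension_poles[OF fin t0 ab _ two] by blast
  then have "\<not> contractible_space Z"
    using contractible_minimal_finite_space two by blast
  moreover have "\<not> contractible_space (subtopology Z (topspace Z - {a, b}))"
    using contractible_minimal_finite_space[OF X] two by auto
  ultimately show ?thesis
    by blast
qed

text \<open>Deleting a beat point of the remainder changes neither side up to homotopy.\<close>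

lemma contractible_space_suspension_remainder_iff:
  assumes "finite (topspace Z)" "t0_space Z" "suspension_poles Z a b" "topspace Z - {a, b} \<noteq> {}"
  shows "contractible_space (subtopology Z (topspace Z - {a, b})) \<longleftrightarrow> contractible_space Z"
  using assms
proof (induction "card (topspace Z)" arbitrary: Z rule: less_induct)
  case less
  note fin = less.prems(1) and t0 = less.prems(2) and ab = less.prems(3)
  let ?X = "subtopology Z (topspace Z - {a, b})"
  show ?case
  proof (cases "\<exists>p. beat_point ?X p")
    case True
    then obtain p where p: "beat_point ?X p"
      by blast
    then have pX: "p \<in> topspace Z - {a, b}"
      using beat_point_in_topspace by fastforce
    let ?Z' = "subtopology Z (topspace Z - {p})"
    have "topspace ?Z' - {a, b} \<noteq> {}"
      using p unfolding beat_point_def down_beat_point_def up_beat_point_def by auto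
    then have "contractible_space (subtopology ?Z' (topspace ?Z' - {a, b}))
        \<longleftrightarrow> contractible_space ?Z'"
      using pX fin t0 suspension_poles_delete[OF ab]
      by (intro less.hyps) (auto intro!: psubset_card_mono simp: t0_space_subtopology)
    moreover have "subtopology ?Z' (topspace ?Z' - {a, b}) = subtopology ?X (topspace ?X - {p})"
      by (simp add: subtopology_subtopology Diff_Int_distrib2 Int_absorb1 insert_commute
          flip: Diff_insert Diff_insert2)
    moreover have "Z homotopy_equivalent_space ?Z'"
      by (rule homotopy_equivalent_space_delete_beat_point[OF fin beat_point_suspension_poles[OF t0 ab p]])
    moreover have "?X homotopy_equivalent_space subtopology ?X (topspace ?X - {p})"
      using fin by (intro homotopy_equivalent_space_delete_beat_point[OF _ p]) auto
    ultimately show ?thesis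
      by (metis homotopy_equivalent_space_contractibility)
  next
    case False
    then show ?thesis
      using contractible_space_suspension_remainder_iff_minimal[OF less.prems] by blast
  qed
qed

section \<open>The non-Hausdorff join\<close>

lemma istopology_nh_join:
  "istopology (\<lambda>U. U \<subseteq> Inl ` topspace A \<union> Inr ` topspace B
      \<and> openin A (Inl -` U) \<and> openin B (Inr -` U)
      \<and> (Inr -` U \<noteq> {} \<longrightarrow> topspace A \<subseteq> Inl -` U))"
  unfolding istopology_def
proof (rule conjI; (intro allI impI)?)
  fix S T :: "('a + 'b) set"
  assume "S \<subseteq> Inl ` topspace A \<union> Inr ` topspace B \<and> openin A (Inl -` S) \<and> openin B (Inr -` S)
      \<and> (Inr -` S \<noteq> {} \<longrightarrow> topspace A \<subseteq> Inl -` S)"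
    and "T \<subseteq> Inl ` topspace A \<union> Inr ` topspace B \<and> openin A (Inl -` T) \<and> openin B (Inr -` T)
      \<and> (Inr -` T \<noteq> {} \<longrightarrow> topspace A \<subseteq> Inl -` T)"
  then show "S \<inter> T \<subseteq> Inl ` topspace A \<union> Inr ` topspace B \<and> openin A (Inl -` (S \<inter> T))
      \<and> openin B (Inr -` (S \<inter> T)) \<and> (Inr -` (S \<inter> T) \<noteq> {} \<longrightarrow> topspace A \<subseteq> Inl -` (S \<inter> T))"
    by (auto simp: vimage_Int openin_Int)
next
  fix K :: "('a + 'b) set set"
  assume K: "\<forall>S\<in>K. S \<subseteq> Inl ` topspace A \<union> Inr ` topspace B \<and> openin A (Inl -` S)
      \<and> openin B (Inr -` S) \<and> (Inr -` S \<noteq> {} \<longrightarrow> topspace A \<subseteq> Inl -` S)"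
  show "\<Union>K \<subseteq> Inl ` topspace A \<union> Inr ` topspace B \<and> openin A (Inl -` \<Union>K)
      \<and> openin B (Inr -` \<Union>K) \<and> (Inr -` \<Union>K \<noteq> {} \<longrightarrow> topspace A \<subseteq> Inl -` \<Union>K)"
  proof (intro conjI impI)
    show "openin A (Inl -` \<Union>K)" "openin B (Inr -` \<Union>K)"
      using K by (auto simp: vimage_Union)
    assume "Inr -` \<Union>K \<noteq> {}"
    then obtain S where "S \<in> K" "Inr -` S \<noteq> {}"
      by blast
    then show "topspace A \<subseteq> Inl -` \<Union>K"
      using K by blast
  qed (use K in blast)
qed

lemma openin_nh_join:
  "openin (nh_join A B) U \<longleftrightarrow> U \<subseteq> Inl ` topspace A \<union> Inr ` topspace B
      \<and> openin A (Inl -` U) \<and> openin B (Inr -` U)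
      \<and> (Inr -` U \<noteq> {} \<longrightarrow> topspace A \<subseteq> Inl -` U)"
  unfolding nh_join_def by (simp only: topology_inverse'[OF istopology_nh_join])

lemma topspace_nh_join: "topspace (nh_join A B) = Inl ` topspace A \<union> Inr ` topspace B"
proof
  show "topspace (nh_join A B) \<subseteq> Inl ` topspace A \<union> Inr ` topspace B"
    using openin_topspace[of "nh_join A B"] unfolding openin_nh_join by blast
  have "Inl -` (Inl ` topspace A \<union> Inr ` topspace B) = topspace A"
    "Inr -` (Inl ` topspace A \<union> Inr ` topspace B) = topspace B"
    by auto
  then have "openin (nh_join A B) (Inl ` topspace A \<union> Inr ` topspace B)"
    unfolding openin_nh_join by simp
  then show "Inl ` topspace A \<union> Inr ` topspace B \<subseteq> topspace (nh_join A B)"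
    by (rule openin_subset)
qed

lemma openin_nh_join_Inl_image:
  assumes "openin A V"
  shows "openin (nh_join A B) (Inl ` V)"
proof -
  have eq: "Inl -` Inl ` V = V" "Inr -` Inl ` V = {}"
    by auto
  show ?thesis
    using assms openin_subset[OF assms] unfolding openin_nh_join eq by auto
qed

lemma spec_le_nh_join_Inl_Inl: "spec_le (nh_join A B) (Inl x) (Inl y) \<longleftrightarrow> spec_le A x y"
proof
  assume "spec_le (nh_join A B) (Inl x) (Inl y)"
  then show "spec_le A x y"
    unfolding spec_le_def by (metis image_iff openin_nh_join_Inl_image sum.inject(1))
next
  assume "spec_le A x y"
  then show "spec_le (nh_join A B) (Inl x) (Inl y)"
    unfolding spec_le_def openin_nh_join by (metis vimage_eq)
qed

lemma spec_le_nh_join_Inl_Inr: "x \<in> topspace A \<Longrightarrow> spec_le (nh_join A B) (Inl x) (Inr u)"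
  unfolding spec_le_def openin_nh_join by blast

lemma not_spec_le_nh_join_Inr_Inl: "x \<in> topspace A \<Longrightarrow> \<not> spec_le (nh_join A B) (Inr u) (Inl x)"
  unfolding spec_le_def using openin_nh_join_Inl_image[OF openin_topspace, of A B] by blast

lemma spec_le_nh_join_Inr_Inr: "spec_le (nh_join A B) (Inr u) (Inr v) \<longleftrightarrow> spec_le B u v"
proof
  assume le: "spec_le (nh_join A B) (Inr u) (Inr v)"
  show "spec_le B u v"
    unfolding spec_le_def
  proof (intro allI impI)
    fix V assume V: "openin B V" "v \<in> V"
    have "Inl -` (Inl ` topspace A \<union> Inr ` V) = topspace A" "Inr -` (Inl ` topspace A \<union> Inr ` V) = V"
      by auto
    then have "openin (nh_join A B) (Inl ` topspace A \<union> Inr ` V)"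
      using V openin_subset[OF V(1)] unfolding openin_nh_join by auto
    then show "u \<in> V"
      using le V(2) by (auto dest: spec_le_openin)
  qed
next
  assume "spec_le B u v"
  then show "spec_le (nh_join A B) (Inr u) (Inr v)"
    unfolding spec_le_def openin_nh_join by (metis vimage_eq)
qed

lemma t0_space_nh_join:
  assumes "t0_space A" "t0_space B"
  shows "t0_space (nh_join A B)"
  unfolding t0_space_iff_spec_le_antisym topspace_nh_join
  using assms spec_le_antisym[OF assms(1)] spec_le_antisym[OF assms(2)]
  by (auto simp: spec_le_nh_join_Inl_Inl spec_le_nh_join_Inr_Inr not_spec_le_nh_join_Inr_Inl)

lemma homeomorphic_space_nh_join_Inl:
  "A homeomorphic_space subtopology (nh_join A B) (Inl ` topspace A)"
  unfolding homeomorphic_space_def homeomorphic_maps_def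
proof (intro exI conjI)
  let ?S = "subtopology (nh_join A B) (Inl ` topspace A)"
  have "{x \<in> topspace A. Inl x \<in> U} = Inl -` U" if "openin (nh_join A B) U" for U
    using that unfolding openin_nh_join by (auto dest: openin_subset)
  then have "continuous_map A (nh_join A B) Inl"
    unfolding continuous_map_def by (auto simp: topspace_nh_join openin_nh_join)
  then show "continuous_map A ?S Inl"
    by (rule continuous_map_into_subtopology) auto
  have "{p \<in> topspace ?S. projl p \<in> V} = Inl ` V \<inter> Inl ` topspace A" if "openin A V" for V
    using openin_subset[OF that] by (auto simp: topspace_nh_join)
  then show "continuous_map ?S A projl"
    unfolding continuous_map_def
    by (auto simp: topspace_nh_join intro: openin_subtopology_Int openin_nh_join_Inl_image)
qed auto

lemma topspace_nh_suspension: "topspace (nh_suspension X) = Inl ` topspace X \<union> range Inr"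
  by (simp add: nh_suspension_def topspace_nh_join S0_def)

lemma t0_space_nh_suspension: "t0_space X \<Longrightarrow> t0_space (nh_suspension X)"
  by (simp add: nh_suspension_def S0_def t0_space_nh_join t0_space_discrete_topology)

lemma spec_le_discrete_topology:
  assumes "v \<in> U"
  shows "spec_le (discrete_topology U) u v \<longleftrightarrow> u = v"
proof
  assume "spec_le (discrete_topology U) u v"
  then show "u = v"
    using assms spec_le_openin[of _ u v "{v}"] by auto
qed simp

lemma spec_le_nh_suspension_Inl_Inr:
  "x \<in> topspace X \<Longrightarrow> spec_le (nh_suspension X) (Inl x) (Inr u)"
  by (simp add: nh_suspension_def spec_le_nh_join_Inl_Inr)

lemma spec_le_nh_suspension_Inr_Inr: "spec_le (nh_suspension X) (Inr u) (Inr v) \<longleftrightarrow> u = v"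
  by (simp add: nh_suspension_def S0_def spec_le_nh_join_Inr_Inr spec_le_discrete_topology)

lemma suspension_poles_nh_suspension:
  "suspension_poles (nh_suspension X) (Inr False) (Inr True)"
  unfolding suspension_poles_def topspace_nh_suspension
  by (auto simp: spec_le_nh_suspension_Inr_Inr spec_le_nh_suspension_Inl_Inr)

lemma contractible_space_nh_suspension_iff:
  assumes "finite (topspace X)" "topspace X \<noteq> {}" "t0_space X"
  shows "contractible_space (nh_suspension X) \<longleftrightarrow> contractible_space X"
proof -
  let ?Y = "nh_suspension X"
  have base: "topspace ?Y - {Inr False, Inr True} = Inl ` topspace X"
    by (auto simp: topspace_nh_suspension)
  have "contractible_space (subtopology ?Y (topspace ?Y - {Inr False, Inr True}))
      \<longleftrightarrow> contractible_space ?Y"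
    using assms base
    by (intro contractible_space_suspension_remainder_iff t0_space_nh_suspension
        suspension_poles_nh_suspension) (auto simp: topspace_nh_suspension)
  moreover have "contractible_space (subtopology ?Y (Inl ` topspace X)) \<longleftrightarrow> contractible_space X"
    unfolding nh_suspension_def
    by (rule homeomorphic_space_contractibility[OF homeomorphic_space_nh_join_Inl, symmetric])
  ultimately show ?thesis
    by (simp only: base)
qed

section \<open>Motion planners and the compact-open topology on paths\<close>

lemma topspace_path_space: "topspace (path_space Y) = path_carrier Y"
proof -
  have "{g \<in> path_carrier Y. g ` {} \<subseteq> topspace Y} = path_carrier Y"
    by simp
  then have "path_carrier Y \<subseteq>
      \<Union>{{g \<in> path_carrier Y. g ` K \<subseteq> V} | K V. compact K \<and> K \<subseteq> {0..1} \<and> openin Y V}"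
    by blast
  then show ?thesis
    unfolding path_space_def by auto
qed

lemma openin_path_space_basic:
  "compact K \<Longrightarrow> K \<subseteq> {0..1} \<Longrightarrow> openin Y V
    \<Longrightarrow> openin (path_space Y) {g \<in> path_carrier Y. g ` K \<subseteq> V}"
  unfolding path_space_def by (rule topology_generated_by_Basis) blast

lemma continuous_map_path_space_uncurry:
  assumes s: "continuous_map W (path_space Y) s"
  shows "continuous_map (prod_topology (top_of_set {0..1}) W) Y (\<lambda>(t, p). s p t)"
proof -
  let ?T = "prod_topology (top_of_set {0..1::real}) W"
  have path: "s p \<in> path_carrier Y" if "p \<in> topspace W" for p
    using continuous_map_image_subset_topspace[OF s] that by (auto simp: topspace_path_space)
  have local: "\<exists>A N. openin (top_of_set {0..1}) A \<and> openin W N \<and> t \<in> A \<and> p \<in> N \<and>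
      A \<times> N \<subseteq> {x \<in> topspace ?T. (\<lambda>(t, p). s p t) x \<in> V}"
    if V: "openin Y V" and t: "t \<in> {0..1}" and p: "p \<in> topspace W" and tp: "s p t \<in> V" for V t p
  proof -
    have "continuous_map (top_of_set {0..1}) Y (s p)"
      using path[OF p] by (simp add: path_carrier_def)
    then have "openin (top_of_set {0..1}) {t' \<in> {0..1}. s p t' \<in> V}"
      using openin_continuous_map_preimage[OF _ V] by fastforce
    then obtain e where e: "e > 0" "\<And>t'. t' \<in> {0..1} \<Longrightarrow> dist t' t < e \<Longrightarrow> s p t' \<in> V"
      using t tp unfolding openin_euclidean_subtopology_iff by blast
    define K where "K = {t - e/2 .. t + e/2} \<inter> {0..1}"
    have K: "compact K" "K \<subseteq> {0..1}"
      by (auto simp: K_def intro: compact_Int_closed)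
    let ?N = "{q \<in> topspace W. s q \<in> {g \<in> path_carrier Y. g ` K \<subseteq> V}}"
    show ?thesis
    proof (intro exI conjI)
      show "openin (top_of_set {0..1}) ({0..1} \<inter> ball t (e/2))"
        by (rule openin_open_Int) simp
      show "openin W ?N"
        using openin_continuous_map_preimage[OF s openin_path_space_basic[OF K V]] .
      show "t \<in> {0..1} \<inter> ball t (e/2)" "p \<in> ?N"
        using t p path[OF p] e by (auto simp: K_def dist_real_def)
      show "({0..1} \<inter> ball t (e/2)) \<times> ?N \<subseteq> {x \<in> topspace ?T. (\<lambda>(t, p). s p t) x \<in> V}"
        by (auto simp: K_def dist_real_def abs_if split: if_splits)
    qed
  qed
  show ?thesis
    unfolding continuous_map_def
  proof (intro conjI allI impI)
    show "(\<lambda>(t, p). s p t) \<in> topspace ?T \<rightarrow> topspace Y"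
      using path continuous_map_image_subset_topspace by (fastforce simp: path_carrier_def)
    show "openin ?T {x \<in> topspace ?T. (\<lambda>(t, p). s p t) x \<in> V}" if "openin Y V" for V
      unfolding openin_prod_topology_alt using local[OF that] by auto
  qed
qed

lemma continuous_map_path_spaceI:
  assumes path: "s ` topspace W \<subseteq> path_carrier Y"
    and h: "continuous_map (prod_topology (top_of_set {0..1}) W) Y (\<lambda>(t, p). s p t)"
  shows "continuous_map W (path_space Y) s"
  unfolding path_space_def
proof (rule continuous_on_generated_topo)
  fix B assume "B \<in> {{g \<in> path_carrier Y. g ` K \<subseteq> V} | K V. compact K \<and> K \<subseteq> {0..1} \<and> openin Y V}"
  then obtain K V where B: "B = {g \<in> path_carrier Y. g ` K \<subseteq> V}"
    and K: "compactin (top_of_set {0..1}) K" and V: "openin Y V"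
    by (auto simp: compactin_subtopology)
  let ?P = "{x \<in> topspace (prod_topology (top_of_set {0..1}) W). (\<lambda>(t, p). s p t) x \<in> V}"
  have eq: "s -` B \<inter> topspace W = {p \<in> topspace W. K \<times> {p} \<subseteq> ?P}"
    using path compactin_subset_topspace[OF K] by (auto simp: B)
  show "openin W (s -` B \<inter> topspace W)"
    unfolding eq
  proof (rule openin_subopen[THEN iffD2], intro ballI)
    fix p assume p: "p \<in> {p \<in> topspace W. K \<times> {p} \<subseteq> ?P}"
    then have "p \<in> topspace W" "K \<times> {p} \<subseteq> ?P"
      by auto
    then obtain A N where "openin W N" "K \<subseteq> A" "p \<in> N" "A \<times> N \<subseteq> ?P"
      using tube_lemma_left[OF openin_continuous_map_preimage[OF h V] K] by meson
    then have "K \<times> N \<subseteq> ?P"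
      by blast
    then have "N \<subseteq> {p \<in> topspace W. K \<times> {p} \<subseteq> ?P}"
      using openin_subset[OF \<open>openin W N\<close>] by blast
    with \<open>openin W N\<close> \<open>p \<in> N\<close>
    show "\<exists>T. openin W T \<and> p \<in> T \<and> T \<subseteq> {p \<in> topspace W. K \<times> {p} \<subseteq> ?P}"
      by blast
  qed
next
  show "s ` topspace W \<subseteq> \<Union>{{g \<in> path_carrier Y. g ` K \<subseteq> V} | K V. compact K \<and> K \<subseteq> {0..1} \<and> openin Y V}"
  proof -
    have "{g \<in> path_carrier Y. g ` {} \<subseteq> topspace Y} \<in>
        {{g \<in> path_carrier Y. g ` K \<subseteq> V} | K V. compact K \<and> K \<subseteq> {0..1} \<and> openin Y V}"
      by blast
    then show ?thesis
      using path by auto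
  qed
qed

lemma has_motion_planner_iff_homotopic:
  "has_motion_planner Y U \<longleftrightarrow>
     homotopic_with (\<lambda>x. True) (subtopology (prod_topology Y Y) U) Y fst snd"
  (is "_ \<longleftrightarrow> homotopic_with _ ?P _ _ _")
proof
  assume "has_motion_planner Y U"
  then obtain s where s: "continuous_map ?P (path_space Y) s"
    and ends: "\<And>p. p \<in> U \<Longrightarrow> s p 0 = fst p \<and> s p 1 = snd p"
    unfolding has_motion_planner_def by blast
  show "homotopic_with (\<lambda>x. True) ?P Y fst snd"
    using continuous_map_path_space_uncurry[OF s] ends by (subst homotopic_with) auto
next
  assume "homotopic_with (\<lambda>x. True) ?P Y fst snd"
  then obtain h where h: "continuous_map (prod_topology (top_of_set {0..1::real}) ?P) Y h"
    and h0: "\<And>x. h (0, x) = fst x" and h1: "\<And>x. h (1, x) = snd x"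
    unfolding homotopic_with_def by blast
  define s where "s p = restrict (\<lambda>t. h (t, p)) {0..1}" for p
  have "continuous_map ?P (path_space Y) s"
  proof (rule continuous_map_path_spaceI)
    have "s p \<in> path_carrier Y" if "p \<in> topspace ?P" for p
    proof -
      have "continuous_map (top_of_set {0..1}) Y (\<lambda>t. h (t, p))"
        using continuous_map_compose[OF continuous_map_pairedI[OF continuous_map_id
              continuous_map_const[THEN iffD2]] h] that by (simp add: o_def)
      then have "continuous_map (top_of_set {0..1}) Y (s p)"
        by (rule continuous_map_eq) (simp add: s_def)
      then show ?thesis
        by (simp add: path_carrier_def s_def)
    qed
    then show "s ` topspace ?P \<subseteq> path_carrier Y"
      by blast
    show "continuous_map (prod_topology (top_of_set {0..1}) ?P) Y (\<lambda>(t, p). s p t)"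
      using h by (rule continuous_map_eq) (auto simp: s_def)
  qed
  then show "has_motion_planner Y U"
    unfolding has_motion_planner_def using h0 h1 by (auto simp: s_def)
qed

section \<open>Topological complexity of the suspension\<close>

lemma has_motion_planner_contractible_space:
  assumes "contractible_space Y"
  shows "has_motion_planner Y U"
proof -
  let ?P = "subtopology (prod_topology Y Y) U"
  obtain c where c: "homotopic_with (\<lambda>x. True) Y Y id (\<lambda>x. c)"
    using assms unfolding contractible_space_def by blast
  have "homotopic_with (\<lambda>x. True) ?P Y (id \<circ> fst) ((\<lambda>x. c) \<circ> fst)"
    by (rule homotopic_with_compose_continuous_map_right[OF c continuous_map_subtopology_fst]) simp
  moreover have "homotopic_with (\<lambda>x. True) ?P Y (id \<circ> snd) ((\<lambda>x. c) \<circ> snd)"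
    by (rule homotopic_with_compose_continuous_map_right[OF c continuous_map_subtopology_snd]) simp
  ultimately have "homotopic_with (\<lambda>x. True) ?P Y fst snd"
    by (simp add: o_def) (meson homotopic_with_trans homotopic_with_symD)
  then show ?thesis
    by (simp add: has_motion_planner_iff_homotopic)
qed

lemma TC_contractible_space:
  assumes "contractible_space Y" "topspace Y \<noteq> {}"
  shows "TC Y = 1"
  unfolding TC_def
proof (rule Least_equality)
  show "tc_cover Y 1"
    unfolding tc_cover_def using has_motion_planner_contractible_space[OF assms(1)]
    by (intro exI[of _ "\<lambda>i. topspace (prod_topology Y Y)"]) (auto simp del: topspace_prod_topology)
  show "1 \<le> k" if "tc_cover Y k" for k
    using that assms(2) by (cases k) (auto simp: tc_cover_def)
qed

lemma tc_cover_card_le: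
  assumes "tc_cover Y k" "finite M" "M \<subseteq> topspace (prod_topology Y Y)"
    and separated: "\<And>U p q. openin (prod_topology Y Y) U \<Longrightarrow> has_motion_planner Y U
        \<Longrightarrow> p \<in> M \<Longrightarrow> q \<in> M \<Longrightarrow> p \<in> U \<Longrightarrow> q \<in> U \<Longrightarrow> p = q"
  shows "card M \<le> k"
proof -
  obtain U where U: "\<And>i. i < k \<Longrightarrow> openin (prod_topology Y Y) (U i) \<and> has_motion_planner Y (U i)"
    and cover: "topspace (prod_topology Y Y) \<subseteq> (\<Union>i<k. U i)"
    using assms(1) unfolding tc_cover_def by blast
  obtain f where f: "\<And>m. m \<in> M \<Longrightarrow> f m < k \<and> m \<in> U (f m)"
    using cover assms(3) by (metis UN_E lessThan_iff subsetD)
  have "inj_on f M"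
    using f U separated by (intro inj_onI) metis
  then have "card M \<le> card {..<k}"
    using f by (intro card_inj_on_le) auto
  then show ?thesis
    by simp
qed

text \<open>On a product of minimal neighbourhoods with a common lower bound \<open>c\<close>, the projections are
connected by the homotopies of comparable maps \<open>fst \<le> a \<ge> c \<le> b \<ge> snd\<close>.\<close>

lemma has_motion_planner_Times_minimal_nbhd:
  assumes "a \<in> topspace Y" "b \<in> topspace Y" "c \<in> topspace Y" "spec_le Y c a" "spec_le Y c b"
  shows "has_motion_planner Y (minimal_nbhd Y a \<times> minimal_nbhd Y b)"
proof -
  let ?P = "subtopology (prod_topology Y Y) (minimal_nbhd Y a \<times> minimal_nbhd Y b)"
  have "homotopic_with (\<lambda>x. True) ?P Y fst (\<lambda>x. a)" "homotopic_with (\<lambda>x. True) ?P Y snd (\<lambda>x. b)"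
    using assms by (auto intro!: homotopic_with_spec_le continuous_map_subtopology_fst
        continuous_map_subtopology_snd simp: minimal_nbhd_def)
  moreover have "homotopic_with (\<lambda>x. True) ?P Y (\<lambda>x. c) (\<lambda>x. a)"
    "homotopic_with (\<lambda>x. True) ?P Y (\<lambda>x. c) (\<lambda>x. b)"
    using assms by (auto intro!: homotopic_with_spec_le)
  ultimately have "homotopic_with (\<lambda>x. True) ?P Y fst snd"
    by (meson homotopic_with_symD homotopic_with_trans)
  then show ?thesis
    by (simp add: has_motion_planner_iff_homotopic)
qed

lemma contractible_space_motion_planner_Times_left:
  assumes "has_motion_planner Y U" "c \<in> topspace Y" "topspace Y \<times> {c} \<subseteq> U"
  shows "contractible_space Y"
proof -
  let ?P = "subtopology (prod_topology Y Y) U"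
  have j: "continuous_map Y ?P (\<lambda>y. (y, c))"
    using assms(2,3) by (intro continuous_map_into_subtopology continuous_map_pairedI) auto
  have "homotopic_with (\<lambda>x. True) Y Y (fst \<circ> (\<lambda>y. (y, c))) (snd \<circ> (\<lambda>y. (y, c)))"
    using assms(1) unfolding has_motion_planner_iff_homotopic
    by (rule homotopic_with_compose_continuous_map_right[OF _ j]) simp
  then show ?thesis
    unfolding contractible_space_def by (auto simp: o_def id_def)
qed

lemma contractible_space_motion_planner_Times_right:
  assumes "has_motion_planner Y U" "c \<in> topspace Y" "{c} \<times> topspace Y \<subseteq> U"
  shows "contractible_space Y"
proof -
  let ?P = "subtopology (prod_topology Y Y) U"
  have j: "continuous_map Y ?P (\<lambda>y. (c, y))"
    using assms(2,3) by (intro continuous_map_into_subtopology continuous_map_pairedI) auto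
  have "homotopic_with (\<lambda>x. True) Y Y (fst \<circ> (\<lambda>y. (c, y))) (snd \<circ> (\<lambda>y. (c, y)))"
    using assms(1) unfolding has_motion_planner_iff_homotopic
    by (rule homotopic_with_compose_continuous_map_right[OF _ j]) simp
  then show ?thesis
    unfolding contractible_space_def by (auto simp: o_def id_def intro: homotopic_with_symD)
qed

lemma spec_le_nh_suspension_poles:
  assumes "y \<in> topspace (nh_suspension X)" "u \<noteq> v"
  shows "spec_le (nh_suspension X) y (Inr u) \<or> spec_le (nh_suspension X) y (Inr v)"
  using assms
  by (cases y) (auto simp: topspace_nh_suspension spec_le_nh_suspension_Inl_Inr
      spec_le_nh_suspension_Inr_Inr)

text \<open>An open set with a motion planner containing two of the four pairs of poles contains a whole
slice \<open>Y \<times> {x}\<close> or \<open>{u} \<times> Y\<close>, because open sets of \<open>Y \<times> Y\<close> are down-closed.\<close>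

lemma contractible_space_motion_planner_two_pole_pairs:
  assumes X: "x0 \<in> topspace X"
    and U: "openin (prod_topology (nh_suspension X) (nh_suspension X)) U"
    and planner: "has_motion_planner (nh_suspension X) U"
    and in_U: "(Inr u1, Inr v1) \<in> U" "(Inr u2, Inr v2) \<in> U" and "(u1, v1) \<noteq> (u2, v2)"
  shows "contractible_space (nh_suspension X)"
proof (cases "u1 = u2")
  case False
  have "(y, Inl x0) \<in> U" if "y \<in> topspace (nh_suspension X)" for y
    using spec_le_nh_suspension_poles[OF that False]
  proof
    assume "spec_le (nh_suspension X) y (Inr u1)"
    then show ?thesis
      by (rule openin_prod_topology_spec_le[OF U in_U(1) _ spec_le_nh_suspension_Inl_Inr[OF X]])
  next
    assume "spec_le (nh_suspension X) y (Inr u2)"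
    then show ?thesis
      by (rule openin_prod_topology_spec_le[OF U in_U(2) _ spec_le_nh_suspension_Inl_Inr[OF X]])
  qed
  then show ?thesis
    using X by (intro contractible_space_motion_planner_Times_left[OF planner, of "Inl x0"])
      (auto simp: topspace_nh_suspension)
next
  case True
  then have "v1 \<noteq> v2"
    using \<open>(u1, v1) \<noteq> (u2, v2)\<close> by blast
  have "(Inr u1, y) \<in> U" if "y \<in> topspace (nh_suspension X)" for y
    using spec_le_nh_suspension_poles[OF that \<open>v1 \<noteq> v2\<close>]
  proof
    assume "spec_le (nh_suspension X) y (Inr v1)"
    then show ?thesis
      by (rule openin_prod_topology_spec_le[OF U in_U(1) spec_le_refl])
  next
    assume "spec_le (nh_suspension X) y (Inr v2)"
    then show ?thesis
      using openin_prod_topology_spec_le[OF U in_U(2) spec_le_refl] True by blast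
  qed
  then show ?thesis
    by (intro contractible_space_motion_planner_Times_right[OF planner, of "Inr u1"])
      (auto simp: topspace_nh_suspension)
qed

lemma tc_cover_nh_suspension_ge_4:
  fixes X :: "'a topology"
  assumes "topspace X \<noteq> {}" "\<not> contractible_space (nh_suspension X)"
    and "tc_cover (nh_suspension X) k"
  shows "4 \<le> k"
proof -
  let ?Y = "nh_suspension X"
  let ?M = "(\<lambda>(u, v). (Inr u :: 'a + bool, Inr v :: 'a + bool)) ` UNIV"
  have "card ?M = 4"
    by (subst card_image) (auto simp: inj_on_def card_UNIV_bool)
  moreover have "card ?M \<le> k"
  proof (rule tc_cover_card_le[OF assms(3)])
    show "?M \<subseteq> topspace (prod_topology ?Y ?Y)"
      by (auto simp: topspace_nh_suspension)
    show "p = q" if "openin (prod_topology ?Y ?Y) U" "has_motion_planner ?Y U"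
      "p \<in> ?M" "q \<in> ?M" "p \<in> U" "q \<in> U" for U p q
      using that contractible_space_motion_planner_two_pole_pairs assms(1,2) by fastforce
  qed simp
  ultimately show ?thesis
    by simp
qed

lemma tc_cover_nh_suspension_4:
  assumes "finite (topspace X)" "topspace X \<noteq> {}"
  shows "tc_cover (nh_suspension X) 4"
proof -
  let ?Y = "nh_suspension X"
  \<comment> \<open>the two binary digits of \<open>i < 4\<close> select the pair of poles\<close>
  define U where "U i = minimal_nbhd ?Y (Inr (odd i)) \<times> minimal_nbhd ?Y (Inr (2 \<le> i))" for i :: nat
  obtain x0 where "x0 \<in> topspace X"
    using assms(2) by blast
  then have x0: "Inl x0 \<in> topspace ?Y"
    by (simp add: topspace_nh_suspension)
  have "openin (prod_topology ?Y ?Y) (U i)" for i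
    unfolding U_def using assms(1)
    by (intro openin_prod_Times_iff[THEN iffD2] disjI2 conjI openin_minimal_nbhd)
      (auto simp: topspace_nh_suspension)
  moreover have "has_motion_planner ?Y (U i)" for i
    unfolding U_def using x0
    by (intro has_motion_planner_Times_minimal_nbhd[of _ _ _ "Inl x0"])
      (auto simp: topspace_nh_suspension spec_le_nh_suspension_Inl_Inr)
  moreover have "topspace (prod_topology ?Y ?Y) \<subseteq> (\<Union>i<4. U i)"
  proof
    fix p assume p: "p \<in> topspace (prod_topology ?Y ?Y)"
    have pole_above: "\<exists>u. spec_le ?Y y (Inr u)" if "y \<in> topspace ?Y" for y
      using spec_le_nh_suspension_poles[OF that] by blast
    obtain u v where "spec_le ?Y (fst p) (Inr u)" "spec_le ?Y (snd p) (Inr v)"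
      using p pole_above by (metis mem_Times_iff topspace_prod_topology)
    then have "p \<in> U ((if u then 1 else 0) + (if v then 2 else 0))"
      using p by (auto simp: U_def minimal_nbhd_def)
    then show "p \<in> (\<Union>i<4. U i)"
      by (auto split: if_splits)
  qed
  ultimately show ?thesis
    unfolding tc_cover_def by blast
qed

theorem theorem2:
  fixes X :: "'a topology"
  assumes "finite (topspace X)" and "topspace X \<noteq> {}" and "t0_space X"
  shows "(contractible_space X \<longrightarrow> TC (nh_suspension X) = 1)
       \<and> (\<not> contractible_space X \<longrightarrow> TC (nh_suspension X) = 4)"
proof (intro conjI impI)
  have contractible_iff: "contractible_space (nh_suspension X) \<longleftrightarrow> contractible_space X"
    using contractible_space_nh_suspension_iff[OF assms] .
  show "TC (nh_suspension X) = 1" if "contractible_space X"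
    using that contractible_iff by (intro TC_contractible_space) (auto simp: topspace_nh_suspension)
  show "TC (nh_suspension X) = 4" if "\<not> contractible_space X"
    unfolding TC_def
  proof (rule Least_equality)
    show "tc_cover (nh_suspension X) 4"
      using tc_cover_nh_suspension_4[OF assms(1,2)] .
    show "4 \<le> k" if "tc_cover (nh_suspension X) k" for k
      using tc_cover_nh_suspension_ge_4[OF assms(2) _ that] \<open>\<not> contractible_space X\<close>
        contractible_iff by blast
  qed
qed

end
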